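(* Assume (A1)–(A4) below. For any $\omega\in\Delta^{L-1}$, $$\beta^*(\omega)=\sum_{t\in\mathcal T}\psi_t(\omega)\,\mathrm{LATE}_t,\qquad \psi_t(\omega)\ge0,\quad\sum_{t\in\mathcal T}\psi_t(\omega)=1,$$ where $\psi_t(\omega)=\sum_{\ell}\omega_\ell\alpha_t(\ell)$.
   Context: Observe i.i.d. $(Y_i,D_i,\mathbf Z_i)$, $D_i\in\{0,1\}$, $\mathbf Z_i=(Z_{1i},\dots,Z_{Li})'\in\{0,1\}^L$, $L\ge2$. Units have potential outcomes $Y_i(0),Y_i(1)$ and compliance type $D_i(\cdot):\{0,1\}^L\to\{0,1\}$, $D_i=D_i(\mathbf Z_i)$, $Y_i=D_iY_i(1)+(1-D_i)Y_i(0)$; $\mathcal T$ is the set of types, $\theta_t=P(D_i(\cdot)=t)$, $\mathrm{LATE}_t=\mathbb E[Y_i(1)-Y_i(0)\mid D_i(\cdot)=t]$, and $t(z_\ell,z_{-\ell})$ is type $t$'s treatment at the instrument vector with $\ell$-th coordinate $z_\ell$, others $z_{-\ell}$. $p_\ell=P(Z_{\ell i}=1)$, $\pi_\ell,\rho_\ell$ the differences of $\mathbb E[D_i\mid Z_{\ell i}=z]$, $\mathbb E[Y_i\mid Z_{\ell i}=z]$ between $z=1,0$, $\mathrm{Wald}_\ell=\rho_\ell/\pi_\ell$, $\Sigma_Z=\mathrm{Var}(\mathbf Z_i)$. $q_\ell(z_{-\ell})=P(Z_{-\ell}=z_{-\ell}\mid Z_\ell=1)$, $q^0_\ell(z_{-\ell})=P(Z_{-\ell}=z_{-\ell}\mid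 Z_\ell=0)$, $\varphi_t(\ell)=\sum_{z_{-\ell}}[t(1,z_{-\ell})q_\ell(z_{-\ell})-t(0,z_{-\ell})q^0_\ell(z_{-\ell})]$, $\alpha_t(\ell)=\theta_t\varphi_t(\ell)/\pi_\ell$. $\Delta^{L-1}$ is the probability simplex in $\mathbb R^L$ and $\beta^*(\omega)=\sum_\ell\omega_\ell\mathrm{Wald}_\ell$ (the estimand of the representative targeting estimator $\sum_\ell\omega_\ell\widehat{\mathrm{Wald}}_\ell$). Assumptions: (A1) $(Y_i(0),Y_i(1),D_i(\cdot))$ independent of $\mathbf Z_i$. (A2) $D_i(z)$ nondecreasing in each coordinate for every $i$. (A3) $p_\ell>0$, $\pi_\ell>0$ for all $\ell$; $\Sigma_Z$ positive definite. (A4) For each $\ell$, $\mathbb E[f(Z_{-\ell})\mid Z_\ell=1]\ge\mathbb E[f(Z_{-\ell})\mid Z_\ell=0]$ for every nondecreasing $f:\{0,1\}^{L-1}\to\mathbb R$. *)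

theory Defs
  imports "HOL-Probability.Probability"
begin

text \<open>Instrument vectors in {0,1}^L are encoded as functions nat => bool that are
  False at every coordinate >= L.  A compliance type is a function from instrument
  vectors to {0,1} (bool); by convention it is False outside {0,1}^L.\<close>

definition Zsp :: "nat \<Rightarrow> (nat \<Rightarrow> bool) set" where
  "Zsp L = {z. \<forall>l. L \<le> l \<longrightarrow> \<not> z l}"

definition canon_types :: "nat \<Rightarrow> ((nat \<Rightarrow> bool) \<Rightarrow> bool) set" where
  "canon_types L = {t. \<forall>z. z \<notin> Zsp L \<longrightarrow> \<not> t z}"

definition Types :: "nat \<Rightarrow> ((nat \<Rightarrow> bool) \<Rightarrow> bool) set" where
  "Types L = {t \<in> canon_types L. mono_on (Zsp L) t}"

definition cexp :: "'a measure \<Rightarrow> ('a \<Rightarrow> real) \<Rightarrow> 'a set \<Rightarrow> real" where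
  "cexp M f A = (\<integral>x. f x * indicator A x \<partial>M) / measure M A"

definition condprob :: "'a measure \<Rightarrow> 'a set \<Rightarrow> 'a set \<Rightarrow> real" where
  "condprob M B A = measure M (B \<inter> A) / measure M A"

definition evZ :: "'a measure \<Rightarrow> ('a \<Rightarrow> nat \<Rightarrow> bool) \<Rightarrow> nat \<Rightarrow> bool \<Rightarrow> 'a set" where
  "evZ M Z l b = {x \<in> space M. Z x l = b}"

definition Dobs :: "('a \<Rightarrow> (nat \<Rightarrow> bool) \<Rightarrow> bool) \<Rightarrow> ('a \<Rightarrow> nat \<Rightarrow> bool) \<Rightarrow> 'a \<Rightarrow> real" where
  "Dobs D Z x = (if D x (Z x) then 1 else 0)"

definition Yobs :: "('a \<Rightarrow> real) \<Rightarrow> ('a \<Rightarrow> real) \<Rightarrow> ('a \<Rightarrow> (nat \<Rightarrow> bool) \<Rightarrow> bool)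
     \<Rightarrow> ('a \<Rightarrow> nat \<Rightarrow> bool) \<Rightarrow> 'a \<Rightarrow> real" where
  "Yobs Y0 Y1 D Z x = (if D x (Z x) then Y1 x else Y0 x)"

definition pZ :: "'a measure \<Rightarrow> ('a \<Rightarrow> nat \<Rightarrow> bool) \<Rightarrow> nat \<Rightarrow> real" where
  "pZ M Z l = measure M (evZ M Z l True)"

definition piZ :: "'a measure \<Rightarrow> ('a \<Rightarrow> (nat \<Rightarrow> bool) \<Rightarrow> bool) \<Rightarrow> ('a \<Rightarrow> nat \<Rightarrow> bool) \<Rightarrow> nat \<Rightarrow> real" where
  "piZ M D Z l = cexp M (Dobs D Z) (evZ M Z l True) - cexp M (Dobs D Z) (evZ M Z l False)"

definition rhoZ :: "'a measure \<Rightarrow> ('a \<Rightarrow> real) \<Rightarrow> ('a \<Rightarrow> real) \<Rightarrow> ('a \<Rightarrow> (nat \<Rightarrow> bool) \<Rightarrow> bool)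
     \<Rightarrow> ('a \<Rightarrow> nat \<Rightarrow> bool) \<Rightarrow> nat \<Rightarrow> real" where
  "rhoZ M Y0 Y1 D Z l = cexp M (Yobs Y0 Y1 D Z) (evZ M Z l True) - cexp M (Yobs Y0 Y1 D Z) (evZ M Z l False)"

definition Wald :: "'a measure \<Rightarrow> ('a \<Rightarrow> real) \<Rightarrow> ('a \<Rightarrow> real) \<Rightarrow> ('a \<Rightarrow> (nat \<Rightarrow> bool) \<Rightarrow> bool)
     \<Rightarrow> ('a \<Rightarrow> nat \<Rightarrow> bool) \<Rightarrow> nat \<Rightarrow> real" where
  "Wald M Y0 Y1 D Z l = rhoZ M Y0 Y1 D Z l / piZ M D Z l"

definition SigmaZ :: "'a measure \<Rightarrow> ('a \<Rightarrow> nat \<Rightarrow> bool) \<Rightarrow> nat \<Rightarrow> nat \<Rightarrow> real" where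
  "SigmaZ M Z l m = measure M {x \<in> space M. Z x l \<and> Z x m} - pZ M Z l * pZ M Z m"

definition posdef :: "nat \<Rightarrow> (nat \<Rightarrow> nat \<Rightarrow> real) \<Rightarrow> bool" where
  "posdef L S \<longleftrightarrow> (\<forall>c::nat \<Rightarrow> real. (\<exists>l<L. c l \<noteq> 0) \<longrightarrow> (\<Sum>l<L. \<Sum>m<L. c l * c m * S l m) > 0)"

text \<open>(A4): nondecreasing functions f of Z_{-l} are represented as functions on {0,1}^L,
  nondecreasing there, evaluated at Z with the l-th coordinate set to 0.\<close>
definition A4 :: "'a measure \<Rightarrow> ('a \<Rightarrow> nat \<Rightarrow> bool) \<Rightarrow> nat \<Rightarrow> bool" where
  "A4 M Z L \<longleftrightarrow> (\<forall>l<L. \<forall>f :: (nat \<Rightarrow> bool) \<Rightarrow> real. mono_on (Zsp L) f \<longrightarrow>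
      cexp M (\<lambda>x. f ((Z x)(l := False))) (evZ M Z l True)
        \<ge> cexp M (\<lambda>x. f ((Z x)(l := False))) (evZ M Z l False))"

text \<open>q_l(z_{-l}) and q^0_l(z_{-l}); z_{-l} is encoded as a vector of Zsp L with z l = False.\<close>
definition qZ :: "'a measure \<Rightarrow> ('a \<Rightarrow> nat \<Rightarrow> bool) \<Rightarrow> nat \<Rightarrow> bool \<Rightarrow> (nat \<Rightarrow> bool) \<Rightarrow> real" where
  "qZ M Z l b z = condprob M {x \<in> space M. (Z x)(l := False) = z} (evZ M Z l b)"

definition phi :: "'a measure \<Rightarrow> ('a \<Rightarrow> nat \<Rightarrow> bool) \<Rightarrow> nat \<Rightarrow> ((nat \<Rightarrow> bool) \<Rightarrow> bool) \<Rightarrow> nat \<Rightarrow> real" where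
  "phi M Z L t l = (\<Sum>z \<in> {z \<in> Zsp L. \<not> z l}.
      (if t (z(l := True)) then 1 else 0) * qZ M Z l True z - (if t z then 1 else 0) * qZ M Z l False z)"

definition theta :: "'a measure \<Rightarrow> ('a \<Rightarrow> (nat \<Rightarrow> bool) \<Rightarrow> bool) \<Rightarrow> ((nat \<Rightarrow> bool) \<Rightarrow> bool) \<Rightarrow> real" where
  "theta M D t = measure M {x \<in> space M. D x = t}"

definition alpha :: "'a measure \<Rightarrow> ('a \<Rightarrow> (nat \<Rightarrow> bool) \<Rightarrow> bool) \<Rightarrow> ('a \<Rightarrow> nat \<Rightarrow> bool) \<Rightarrow> nat
     \<Rightarrow> ((nat \<Rightarrow> bool) \<Rightarrow> bool) \<Rightarrow> nat \<Rightarrow> real" where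
  "alpha M D Z L t l = theta M D t * phi M Z L t l / piZ M D Z l"

definition psi :: "'a measure \<Rightarrow> ('a \<Rightarrow> (nat \<Rightarrow> bool) \<Rightarrow> bool) \<Rightarrow> ('a \<Rightarrow> nat \<Rightarrow> bool) \<Rightarrow> nat
     \<Rightarrow> (nat \<Rightarrow> real) \<Rightarrow> ((nat \<Rightarrow> bool) \<Rightarrow> bool) \<Rightarrow> real" where
  "psi M D Z L w t = (\<Sum>l<L. w l * alpha M D Z L t l)"

definition LATE :: "'a measure \<Rightarrow> ('a \<Rightarrow> real) \<Rightarrow> ('a \<Rightarrow> real) \<Rightarrow> ('a \<Rightarrow> (nat \<Rightarrow> bool) \<Rightarrow> bool)
     \<Rightarrow> ((nat \<Rightarrow> bool) \<Rightarrow> bool) \<Rightarrow> real" where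
  "LATE M Y0 Y1 D t = cexp M (\<lambda>x. Y1 x - Y0 x) {x \<in> space M. D x = t}"

definition beta_star :: "'a measure \<Rightarrow> ('a \<Rightarrow> real) \<Rightarrow> ('a \<Rightarrow> real) \<Rightarrow> ('a \<Rightarrow> (nat \<Rightarrow> bool) \<Rightarrow> bool)
     \<Rightarrow> ('a \<Rightarrow> nat \<Rightarrow> bool) \<Rightarrow> nat \<Rightarrow> (nat \<Rightarrow> real) \<Rightarrow> real" where
  "beta_star M Y0 Y1 D Z L w = (\<Sum>l<L. w l * Wald M Y0 Y1 D Z l)"

definition wsimplex :: "nat \<Rightarrow> (nat \<Rightarrow> real) \<Rightarrow> bool" where
  "wsimplex L w \<longleftrightarrow> (\<forall>l<L. 0 \<le> w l) \<and> (\<Sum>l<L. w l) = 1"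

end

theory Submission
  imports Defs
begin

text \<open>Since (Y(0), Y(1), D(.)) is independent of Z, conditioning on Z_l = b leaves the type
  distribution theta unchanged and only changes which types are treated:
  E[D | Z_l = b] = sum_t theta_t P(t(Z) = 1 | Z_l = b) and
  E[Y | Z_l = b] = E[Y(0)] + sum_t theta_t LATE_t P(t(Z) = 1 | Z_l = b).
  Differencing over b gives pi_l = sum_t theta_t phi_t(l) and rho_l = sum_t theta_t LATE_t phi_t(l),
  so Wald_l = sum_t alpha_t(l) LATE_t with sum_t alpha_t(l) = 1, and averaging over omega yields psi.
  For phi_t(l) >= 0: monotonicity of t gives P(t(Z) = 1 | Z_l = 1) >= E[t(Z_{-l}, 0) | Z_l = 1], and
  (A4) gives E[t(Z_{-l}, 0) | Z_l = 1] >= E[t(Z_{-l}, 0) | Z_l = 0] = P(t(Z) = 1 | Z_l = 0).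
  Positive definiteness of Sigma_Z is used only to get P(Z_l = 0) > 0.\<close>

lemma finite_Zsp: "finite (Zsp L)"
  by (rule inj_on_finite[of Collect _ "Pow {..<L}"])
     (auto simp: Zsp_def inj_on_def not_le[symmetric])

lemma finite_Types: "finite (Types L)"
  by (rule inj_on_finite[of Collect _ "Pow (Zsp L)"])
     (auto simp: Types_def canon_types_def inj_on_def intro: finite_Zsp)

lemma posdef_diag_pos:
  assumes "posdef L S" "l < L"
  shows "0 < S l l"
proof -
  let ?e = "\<lambda>m. if m = l then 1 else 0 :: real"
  have "0 < (\<Sum>m<L. \<Sum>n<L. ?e m * ?e n * S m n)"
    using assms unfolding posdef_def by auto
  also have "\<dots> = (\<Sum>m<L. ?e m * (\<Sum>n<L. ?e n * S m n))"
    by (simp add: mult.assoc sum_distrib_left)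
  also have "\<dots> = S l l"
    using assms(2) by (simp add: if_distrib[of "\<lambda>x. x * _"] sum.delta cong: if_cong)
  finally show ?thesis .
qed

lemma Int_stable_vimage: "Int_stable {X -` A \<inter> \<Omega> | A. A \<in> sets N}"
proof (rule Int_stableI)
  fix a b
  assume "a \<in> {X -` A \<inter> \<Omega> | A. A \<in> sets N}" "b \<in> {X -` A \<inter> \<Omega> | A. A \<in> sets N}"
  then obtain A B where "A \<in> sets N" "B \<in> sets N" "a = X -` A \<inter> \<Omega>" "b = X -` B \<inter> \<Omega>"
    by blast
  then show "a \<inter> b \<in> {X -` A \<inter> \<Omega> | A. A \<in> sets N}"
    by (intro CollectI exI[of _ "A \<inter> B"]) auto
qed

lemma integral_sum_partition:
  fixes f :: "'a \<Rightarrow> real"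
  assumes "finite I" and "\<And>x. x \<in> space M \<Longrightarrow> W x \<in> I"
    and "\<And>i. i \<in> I \<Longrightarrow> integrable M (\<lambda>x. f x * indicator {x \<in> space M. W x = i} x)"
  shows "(\<integral>x. f x \<partial>M) = (\<Sum>i\<in>I. \<integral>x. f x * indicator {x \<in> space M. W x = i} x \<partial>M)"
proof -
  have "(\<integral>x. f x \<partial>M) = (\<integral>x. (\<Sum>i\<in>I. f x * indicator {x \<in> space M. W x = i} x) \<partial>M)"
    using assms(1,2) by (intro Bochner_Integration.integral_cong) (auto simp: indicator_def eq_commute[of "W _"])
  also have "\<dots> = (\<Sum>i\<in>I. \<integral>x. f x * indicator {x \<in> space M. W x = i} x \<partial>M)"
    using assms(3) by (rule Bochner_Integration.integral_sum)
  finally show ?thesis .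
qed

lemma (in finite_measure) integral_mult_indicator_eq_measure_cexp:
  assumes "A \<in> sets M"
  shows "(\<integral>x. f x * indicator A x \<partial>M) = measure M A * cexp M f A"
proof (cases "measure M A = 0")
  case True
  then have "AE x in M. x \<notin> A"
    using assms by (intro AE_not_in) (simp add: null_sets_def emeasure_eq_measure)
  then have "(\<integral>x. f x * indicator A x \<partial>M) = 0"
    by (intro integral_eq_zero_AE) (auto elim: eventually_mono)
  with True show ?thesis by simp
qed (simp add: cexp_def)

lemma vimage_family_subset_of_factor:
  assumes H: "H \<in> measurable N N'" and X: "X \<in> measurable M N"
    and f: "\<And>x. x \<in> space M \<Longrightarrow> f x = H (X x)"
  shows "{f -` A \<inter> space M | A. A \<in> sets N'} \<subseteq> {X -` B \<inter> space M | B. B \<in> sets N}"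
proof clarify
  fix A assume "A \<in> sets N'"
  then have "H -` A \<inter> space N \<in> sets N"
    using H by (rule measurable_sets[rotated])
  moreover have "f -` A \<inter> space M = X -` (H -` A \<inter> space N) \<inter> space M"
    using f measurable_space[OF X] by auto
  ultimately show "\<exists>B. f -` A \<inter> space M = X -` B \<inter> space M \<and> B \<in> sets N"
    by blast
qed

lemma (in prob_space) indep_set_mono:
  "indep_set A B \<Longrightarrow> A' \<subseteq> A \<Longrightarrow> B' \<subseteq> B \<Longrightarrow> indep_set A' B'"
  unfolding indep_set_def by (erule indep_sets_mono_sets) (auto split: bool.split)

lemma (in prob_space) integral_mult_indicator_indep:
  fixes f :: "'a \<Rightarrow> real"
  assumes indep: "indep_set {X -` A \<inter> space M | A. A \<in> sets N} {Y -` B \<inter> space M | B. B \<in> sets K}"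
    and X: "X \<in> measurable M N" and Y: "Y \<in> measurable M K"
    and H: "H \<in> borel_measurable N" and f: "\<And>x. x \<in> space M \<Longrightarrow> f x = H (X x)"
    and int: "integrable M f" and S: "S \<in> sets K"
  shows "(\<integral>x. f x * indicator (Y -` S \<inter> space M) x \<partial>M) = expectation f * prob (Y -` S \<inter> space M)"
proof -
  let ?g = "indicator (Y -` S \<inter> space M) :: 'a \<Rightarrow> real"
  have YS: "Y -` S \<inter> space M \<in> sets M"
    using measurable_sets[OF Y S] .
  have "indep_set {f -` A \<inter> space M | A. A \<in> sets borel} {?g -` B \<inter> space M | B. B \<in> sets borel}"
  proof (rule indep_set_mono[OF indep])
    show "{f -` A \<inter> space M | A. A \<in> sets borel} \<subseteq> {X -` A \<inter> space M | A. A \<in> sets N}"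
      using H X f by (rule vimage_family_subset_of_factor)
    show "{?g -` B \<inter> space M | B. B \<in> sets borel} \<subseteq> {Y -` B \<inter> space M | B. B \<in> sets K}"
      using borel_measurable_indicator[OF S] Y by (rule vimage_family_subset_of_factor) (simp add: indicator_def)
  qed
  moreover have "f \<in> borel_measurable M"
    using int by simp
  ultimately have "indep_var borel f borel ?g"
    using YS by (simp add: indep_var_eq indep_set_sigma_sets Int_stable_vimage)
  then have "(\<integral>x. f x * ?g x \<partial>M) = expectation f * expectation ?g"
    using int YS by (intro indep_var_lebesgue_integral) (auto simp: less_top[symmetric])
  then show ?thesis
    using YS by simp
qed

lemma cexp_mono:
  assumes "integrable M (\<lambda>x. f x * indicator A x)" "integrable M (\<lambda>x. g x * indicator A x)"
    and "\<And>x. x \<in> A \<Longrightarrow> f x \<le> g x"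
  shows "cexp M f A \<le> cexp M g A"
  unfolding cexp_def using assms
  by (intro divide_right_mono integral_mono) (auto simp: indicator_def)

locale instrument_model = prob_space M for M :: "'a measure" +
  fixes L :: nat and Z :: "'a \<Rightarrow> nat \<Rightarrow> bool"
  assumes measurable_Z: "Z \<in> measurable M (count_space UNIV)"
    and Z_in_Zsp: "x \<in> space M \<Longrightarrow> Z x \<in> Zsp L"
begin

lemma sets_Collect_Z: "{x \<in> space M. P (Z x)} \<in> sets M"
  using measurable_sets[OF measurable_Z, of "Collect P"] by (simp add: vimage_def Int_def conj_commute)

lemma evZ_in_sets: "evZ M Z l b \<in> sets M"
  unfolding evZ_def by (rule sets_Collect_Z)

lemma prob_evZ_False_pos:
  assumes "posdef L (SigmaZ M Z)" "l < L" "0 < pZ M Z l"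
  shows "0 < prob (evZ M Z l False)"
proof -
  have "0 < pZ M Z l * (1 - pZ M Z l)"
    using posdef_diag_pos[OF assms(1,2)] by (simp add: SigmaZ_def pZ_def evZ_def algebra_simps)
  then have "pZ M Z l < 1"
    using assms(3) zero_less_mult_pos by force
  moreover have "evZ M Z l False = space M - evZ M Z l True"
    by (auto simp: evZ_def)
  ultimately show ?thesis
    using evZ_in_sets by (simp add: prob_compl pZ_def)
qed

lemma sum_qZ_eq_cexp:
  "(\<Sum>z \<in> {z \<in> Zsp L. \<not> z l}. g z * qZ M Z l b z) = cexp M (\<lambda>x. g ((Z x)(l := False))) (evZ M Z l b)"
proof -
  let ?E = "evZ M Z l b" and ?W = "\<lambda>x. (Z x)(l := False)"
  let ?cell = "\<lambda>z. {x \<in> space M. ?W x = z} \<inter> ?E"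
  have cell: "?cell z \<in> sets M" for z
    by (intro sets.Int sets_Collect_Z evZ_in_sets)
  have piece: "g (?W x) * indicator ?E x * indicator {x \<in> space M. ?W x = z} x = g z * indicator (?cell z) x"
    for x z by (auto simp: indicator_def)
  have "(\<integral>x. g (?W x) * indicator ?E x \<partial>M)
      = (\<Sum>z \<in> {z \<in> Zsp L. \<not> z l}. \<integral>x. g (?W x) * indicator ?E x * indicator {x \<in> space M. ?W x = z} x \<partial>M)"
    using finite_Zsp Z_in_Zsp
    by (intro integral_sum_partition) (auto simp: piece cell less_top[symmetric] Zsp_def)
  also have "\<dots> = (\<Sum>z \<in> {z \<in> Zsp L. \<not> z l}. g z * measure M (?cell z))"
    using cell by (simp add: piece Int_absorb2 sets.sets_into_space)
  finally show ?thesis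
    by (simp add: cexp_def qZ_def condprob_def sum_divide_distrib)
qed

lemma integrable_of_Z_event: "integrable M (\<lambda>x. if P (Z x) then 1 else 0 :: real)"
proof -
  have "integrable M (indicator {x \<in> space M. P (Z x)} :: 'a \<Rightarrow> real)"
    using sets_Collect_Z by (simp add: less_top[symmetric])
  moreover have "integrable M (indicator {x \<in> space M. P (Z x)} :: 'a \<Rightarrow> real)
      \<longleftrightarrow> integrable M (\<lambda>x. if P (Z x) then 1 else 0 :: real)"
    by (intro Bochner_Integration.integrable_cong) (auto simp: indicator_def)
  ultimately show ?thesis by simp
qed

lemma phi_eq_cexp_diff:
  "phi M Z L t l = cexp M (\<lambda>x. if t ((Z x)(l := True)) then 1 else 0) (evZ M Z l True)
                 - cexp M (\<lambda>x. if t ((Z x)(l := False)) then 1 else 0) (evZ M Z l False)"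
  using sum_qZ_eq_cexp[of "\<lambda>z. if t (z(l := True)) then 1 else 0" l True]
    sum_qZ_eq_cexp[of "\<lambda>z. if t z then 1 else 0" l False]
  by (simp add: phi_def sum_subtractf)

lemma cexp_evZ_eq_condprob:
  "cexp M (\<lambda>x. if t ((Z x)(l := b)) then 1 else 0) (evZ M Z l b) = condprob M {x \<in> space M. t (Z x)} (evZ M Z l b)"
proof -
  have "(\<integral>x. (if t ((Z x)(l := b)) then 1 else 0 :: real) * indicator (evZ M Z l b) x \<partial>M)
      = (\<integral>x. indicator ({x \<in> space M. t (Z x)} \<inter> evZ M Z l b) x \<partial>M)"
  proof (intro Bochner_Integration.integral_cong refl)
    fix x assume "x \<in> space M"
    then show "(if t ((Z x)(l := b)) then 1 else 0 :: real) * indicator (evZ M Z l b) x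
        = indicator ({x \<in> space M. t (Z x)} \<inter> evZ M Z l b) x"
      by (cases "Z x l = b") (simp_all add: evZ_def indicator_def fun_upd_idem)
  qed
  then show ?thesis
    using sets_Collect_Z evZ_in_sets by (simp add: cexp_def condprob_def Int_absorb2 sets.sets_into_space)
qed

lemma phi_eq_condprob_diff:
  "phi M Z L t l = condprob M {x \<in> space M. t (Z x)} (evZ M Z l True)
                 - condprob M {x \<in> space M. t (Z x)} (evZ M Z l False)"
  by (simp add: phi_eq_cexp_diff cexp_evZ_eq_condprob)

lemma phi_nonneg:
  assumes "A4 M Z L" "l < L" "t \<in> Types L"
  shows "0 \<le> phi M Z L t l"
proof -
  let ?g = "\<lambda>z. if t z then 1 else 0 :: real"
  have mono: "mono_on (Zsp L) ?g"
    using assms(3) by (auto simp: Types_def mono_on_def)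
  have int: "integrable M (\<lambda>x. ?g ((Z x)(l := b)) * indicator (evZ M Z l True) x)" for b
    using evZ_in_sets integrable_of_Z_event[of "\<lambda>z. t (z(l := b))"]
    by (rule integrable_real_mult_indicator)
  have "cexp M (\<lambda>x. ?g ((Z x)(l := False))) (evZ M Z l False)
      \<le> cexp M (\<lambda>x. ?g ((Z x)(l := False))) (evZ M Z l True)"
    using assms(1,2) mono unfolding A4_def by blast
  also have "\<dots> \<le> cexp M (\<lambda>x. ?g ((Z x)(l := True))) (evZ M Z l True)"
  proof (rule cexp_mono[OF int int])
    fix x assume "x \<in> evZ M Z l True"
    then have "(Z x)(l := False) \<in> Zsp L" "(Z x)(l := True) \<in> Zsp L"
      using Z_in_Zsp assms(2) by (auto simp: evZ_def Zsp_def)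
    then show "?g ((Z x)(l := False)) \<le> ?g ((Z x)(l := True))"
      by (rule mono_onD[OF mono]) (simp add: le_fun_def)
  qed
  finally show ?thesis
    by (simp add: phi_eq_cexp_diff)
qed

lemma psi_nonneg:
  assumes "A4 M Z L" "wsimplex L w" "\<And>l. l < L \<Longrightarrow> 0 < piZ M D Z l" "t \<in> Types L"
  shows "0 \<le> psi M D Z L w t"
  using assms phi_nonneg[OF assms(1) _ assms(4)]
  by (auto simp: psi_def alpha_def theta_def wsimplex_def intro!: sum_nonneg mult_nonneg_nonneg divide_nonneg_pos)

end

locale iv_model = instrument_model +
  fixes Y0 Y1 :: "'a \<Rightarrow> real" and D :: "'a \<Rightarrow> (nat \<Rightarrow> bool) \<Rightarrow> bool"
  assumes measurable_D: "D \<in> measurable M (count_space UNIV)"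
    and D_in_Types: "x \<in> space M \<Longrightarrow> D x \<in> Types L"
    and integrable_Y0: "integrable M Y0" and integrable_Y1: "integrable M Y1"
    and indep_Z: "indep_set
      {(\<lambda>x. (Y0 x, Y1 x, D x)) -` A \<inter> space M | A. A \<in> sets (borel \<Otimes>\<^sub>M borel \<Otimes>\<^sub>M count_space UNIV)}
      {Z -` B \<inter> space M | B. B \<in> sets (count_space UNIV)}"
begin

lemma sets_Collect_D: "{x \<in> space M. D x = t} \<in> sets M"
  using measurable_sets[OF measurable_D, of "{t}"] by (simp add: vimage_def Int_def conj_commute)

lemma sets_treated: "{x \<in> space M. D x (Z x)} \<in> sets M"
proof -
  \<comment> \<open>the event is not a preimage under D or Z alone; split it over the finitely many types\<close>
  have "{x \<in> space M. D x (Z x)} = (\<Union>t\<in>Types L. {x \<in> space M. D x = t} \<inter> {x \<in> space M. t (Z x)})"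
    using D_in_Types by auto
  then show ?thesis
    using finite_Types sets_Collect_D sets_Collect_Z by auto
qed

lemma integrable_mult_Dobs:
  assumes "integrable M f"
  shows "integrable M (\<lambda>x. f x * Dobs D Z x)"
proof -
  have "integrable M (\<lambda>x. f x * indicator {x \<in> space M. D x (Z x)} x)"
    using sets_treated assms by (rule integrable_real_mult_indicator)
  moreover have "integrable M (\<lambda>x. f x * indicator {x \<in> space M. D x (Z x)} x)
      \<longleftrightarrow> integrable M (\<lambda>x. f x * Dobs D Z x)"
    by (intro Bochner_Integration.integrable_cong) (simp_all add: Dobs_def indicator_def)
  ultimately show ?thesis by simp
qed

lemma integral_mult_indicator_Z_event:
  assumes "H \<in> borel_measurable (borel \<Otimes>\<^sub>M borel \<Otimes>\<^sub>M count_space UNIV)"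
    and "\<And>x. x \<in> space M \<Longrightarrow> f x = H (Y0 x, Y1 x, D x)" and "integrable M f"
  shows "(\<integral>x. f x * indicator {x \<in> space M. P (Z x)} x \<partial>M) = expectation f * prob {x \<in> space M. P (Z x)}"
proof -
  have "(\<lambda>x. (Y0 x, Y1 x, D x)) \<in> measurable M (borel \<Otimes>\<^sub>M borel \<Otimes>\<^sub>M count_space UNIV)"
    using integrable_Y0 integrable_Y1 measurable_D by measurable
  from integral_mult_indicator_indep[OF indep_Z this measurable_Z assms, of "Collect P"]
  show ?thesis
    by (simp add: vimage_def Int_def conj_commute)
qed

lemma integral_Dobs_evZ:
  assumes H: "H \<in> borel_measurable (borel \<Otimes>\<^sub>M borel \<Otimes>\<^sub>M count_space UNIV)"
    and f: "\<And>x. x \<in> space M \<Longrightarrow> f x = H (Y0 x, Y1 x, D x)" and int: "integrable M f"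
  shows "(\<integral>x. f x * Dobs D Z x * indicator (evZ M Z l b) x \<partial>M)
       = (\<Sum>t\<in>Types L. (\<integral>x. f x * indicator {x \<in> space M. D x = t} x \<partial>M)
                         * prob ({x \<in> space M. t (Z x)} \<inter> evZ M Z l b))"
proof -
  let ?f = "\<lambda>t x. f x * indicator {x \<in> space M. D x = t} x"
  have piece: "f x * Dobs D Z x * indicator (evZ M Z l b) x * indicator {x \<in> space M. D x = t} x
      = ?f t x * indicator {x \<in> space M. t (Z x) \<and> Z x l = b} x" for x t
    by (auto simp: Dobs_def evZ_def indicator_def)
  have int_t: "integrable M (?f t)" for t
    using sets_Collect_D int by (rule integrable_real_mult_indicator)
  have "(\<integral>x. f x * Dobs D Z x * indicator (evZ M Z l b) x \<partial>M)
      = (\<Sum>t\<in>Types L. \<integral>x. f x * Dobs D Z x * indicator (evZ M Z l b) x * indicator {x \<in> space M. D x = t} x \<partial>M)"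
    using finite_Types D_in_Types
  proof (rule integral_sum_partition)
    show "integrable M (\<lambda>x. f x * Dobs D Z x * indicator (evZ M Z l b) x * indicator {x \<in> space M. D x = t} x)" for t
      unfolding piece using sets_Collect_Z int_t by (rule integrable_real_mult_indicator)
  qed
  also have "\<dots> = (\<Sum>t\<in>Types L. \<integral>x. ?f t x * indicator {x \<in> space M. t (Z x) \<and> Z x l = b} x \<partial>M)"
    by (simp only: piece)
  also have "\<dots> = (\<Sum>t\<in>Types L. (\<integral>x. ?f t x \<partial>M) * prob {x \<in> space M. t (Z x) \<and> Z x l = b})"
  proof (intro sum.cong refl integral_mult_indicator_Z_event)
    fix t
    show "(\<lambda>v. H v * indicator {t} (snd (snd v))) \<in> borel_measurable (borel \<Otimes>\<^sub>M borel \<Otimes>\<^sub>M count_space UNIV)"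
      using H measurable_compose[OF measurable_compose[OF measurable_snd measurable_snd] borel_measurable_count_space]
      by (rule borel_measurable_times)
    show "?f t x = H (Y0 x, Y1 x, D x) * indicator {t} (snd (snd (Y0 x, Y1 x, D x)))" if "x \<in> space M" for x
      using that f by (simp add: indicator_def)
  qed (rule int_t)
  also have "\<dots> = (\<Sum>t\<in>Types L. (\<integral>x. ?f t x \<partial>M) * prob ({x \<in> space M. t (Z x)} \<inter> evZ M Z l b))"
    by (intro sum.cong refl arg_cong[where f="\<lambda>A. _ * prob A"]) (auto simp: evZ_def)
  finally show ?thesis .
qed

lemma cexp_Dobs_evZ:
  "cexp M (Dobs D Z) (evZ M Z l b)
     = (\<Sum>t\<in>Types L. theta M D t * condprob M {x \<in> space M. t (Z x)} (evZ M Z l b))"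
proof -
  have theta: "(\<integral>x. 1 * indicator {x \<in> space M. D x = t} x \<partial>M) = theta M D t" for t
    using sets_Collect_D by (simp add: theta_def)
  have "(\<integral>x. 1 * Dobs D Z x * indicator (evZ M Z l b) x \<partial>M)
      = (\<Sum>t\<in>Types L. (\<integral>x. 1 * indicator {x \<in> space M. D x = t} x \<partial>M) * prob ({x \<in> space M. t (Z x)} \<inter> evZ M Z l b))"
    by (rule integral_Dobs_evZ[where H="\<lambda>_. 1"]) simp_all
  then show ?thesis
    by (simp only: theta) (simp add: cexp_def condprob_def sum_divide_distrib)
qed

lemma piZ_eq_sum_theta_phi: "piZ M D Z l = (\<Sum>t\<in>Types L. theta M D t * phi M Z L t l)"
  by (simp add: piZ_def cexp_Dobs_evZ phi_eq_condprob_diff right_diff_distrib sum_subtractf)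

text \<open>Unlike cexp_Dobs_evZ, this needs P(Z_l = b) > 0: for a null event cexp is 0, not E[Y(0)].\<close>

lemma cexp_Yobs_evZ:
  assumes "prob (evZ M Z l b) \<noteq> 0"
  shows "cexp M (Yobs Y0 Y1 D Z) (evZ M Z l b) = expectation Y0
           + (\<Sum>t\<in>Types L. theta M D t * LATE M Y0 Y1 D t * condprob M {x \<in> space M. t (Z x)} (evZ M Z l b))"
proof -
  let ?E = "evZ M Z l b"
  have "(\<integral>x. Yobs Y0 Y1 D Z x * indicator ?E x \<partial>M)
      = (\<integral>x. Y0 x * indicator ?E x + (Y1 x - Y0 x) * Dobs D Z x * indicator ?E x \<partial>M)"
    by (intro Bochner_Integration.integral_cong) (auto simp: Yobs_def Dobs_def algebra_simps)
  also have "\<dots> = (\<integral>x. Y0 x * indicator ?E x \<partial>M) + (\<integral>x. (Y1 x - Y0 x) * Dobs D Z x * indicator ?E x \<partial>M)"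
    using evZ_in_sets integrable_Y0 integrable_Y1
    by (intro Bochner_Integration.integral_add integrable_real_mult_indicator integrable_mult_Dobs) auto
  also have "(\<integral>x. Y0 x * indicator ?E x \<partial>M) = expectation Y0 * prob ?E"
    using integral_mult_indicator_Z_event[of fst Y0 "\<lambda>z. z l = b"] integrable_Y0 by (simp add: evZ_def)
  also have "(\<integral>x. (Y1 x - Y0 x) * Dobs D Z x * indicator ?E x \<partial>M)
      = (\<Sum>t\<in>Types L. theta M D t * LATE M Y0 Y1 D t * prob ({x \<in> space M. t (Z x)} \<inter> ?E))"
    using integral_Dobs_evZ[of "\<lambda>v. fst (snd v) - fst v" "\<lambda>x. Y1 x - Y0 x" l b] integrable_Y0 integrable_Y1 sets_Collect_D
    by (simp add: integral_mult_indicator_eq_measure_cexp theta_def LATE_def)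
  finally show ?thesis
    using assms by (simp add: cexp_def condprob_def add_divide_distrib sum_divide_distrib)
qed

lemma rhoZ_eq_sum_theta_LATE_phi:
  assumes "prob (evZ M Z l True) \<noteq> 0" "prob (evZ M Z l False) \<noteq> 0"
  shows "rhoZ M Y0 Y1 D Z l = (\<Sum>t\<in>Types L. theta M D t * LATE M Y0 Y1 D t * phi M Z L t l)"
  using assms by (simp add: rhoZ_def cexp_Yobs_evZ phi_eq_condprob_diff right_diff_distrib sum_subtractf)

lemma Wald_eq_sum_alpha_LATE:
  assumes "prob (evZ M Z l True) \<noteq> 0" "prob (evZ M Z l False) \<noteq> 0"
  shows "Wald M Y0 Y1 D Z l = (\<Sum>t\<in>Types L. alpha M D Z L t l * LATE M Y0 Y1 D t)"
  using assms by (simp add: Wald_def rhoZ_eq_sum_theta_LATE_phi alpha_def sum_divide_distrib ac_simps)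

lemma sum_alpha_eq_one:
  assumes "piZ M D Z l \<noteq> 0"
  shows "(\<Sum>t\<in>Types L. alpha M D Z L t l) = 1"
  using assms by (simp add: alpha_def piZ_eq_sum_theta_phi sum_divide_distrib[symmetric])

lemma beta_star_eq_sum_psi_LATE:
  assumes "\<And>l b. l < L \<Longrightarrow> prob (evZ M Z l b) \<noteq> 0"
  shows "beta_star M Y0 Y1 D Z L w = (\<Sum>t\<in>Types L. psi M D Z L w t * LATE M Y0 Y1 D t)"
proof -
  have "beta_star M Y0 Y1 D Z L w = (\<Sum>l<L. \<Sum>t\<in>Types L. w l * alpha M D Z L t l * LATE M Y0 Y1 D t)"
    unfolding beta_star_def
    by (intro sum.cong refl) (simp add: Wald_eq_sum_alpha_LATE assms sum_distrib_left mult.assoc)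
  also have "\<dots> = (\<Sum>t\<in>Types L. psi M D Z L w t * LATE M Y0 Y1 D t)"
    unfolding psi_def sum_distrib_right by (rule sum.swap)
  finally show ?thesis .
qed

lemma sum_psi_eq_one:
  assumes "wsimplex L w" "\<And>l. l < L \<Longrightarrow> piZ M D Z l \<noteq> 0"
  shows "(\<Sum>t\<in>Types L. psi M D Z L w t) = 1"
proof -
  have "(\<Sum>t\<in>Types L. psi M D Z L w t) = (\<Sum>l<L. w l * (\<Sum>t\<in>Types L. alpha M D Z L t l))"
    unfolding psi_def by (subst sum.swap) (simp add: sum_distrib_left)
  also have "\<dots> = (\<Sum>l<L. w l)"
    by (intro sum.cong refl) (simp add: assms(2) sum_alpha_eq_one)
  also have "\<dots> = 1"
    using assms(1) by (simp add: wsimplex_def)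
  finally show ?thesis .
qed

end

theorem proposition9:
  fixes M :: "'a measure" and L :: nat
    and Y0 Y1 :: "'a \<Rightarrow> real"
    and D :: "'a \<Rightarrow> (nat \<Rightarrow> bool) \<Rightarrow> bool"
    and Z :: "'a \<Rightarrow> nat \<Rightarrow> bool"
    and w :: "nat \<Rightarrow> real"
  assumes "prob_space M"
    and "2 \<le> L"
    and "Z \<in> measurable M (count_space UNIV)"
    and "\<forall>x \<in> space M. Z x \<in> Zsp L"
    and "D \<in> measurable M (count_space UNIV)"
    and "\<forall>x \<in> space M. D x \<in> canon_types L"
    and "integrable M Y0" and "integrable M Y1"
    and A1: "prob_space.indep_set M
               {(\<lambda>x. (Y0 x, Y1 x, D x)) -` A \<inter> space M | A.
                  A \<in> sets (borel \<Otimes>\<^sub>M borel \<Otimes>\<^sub>M count_space UNIV)}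
               {Z -` B \<inter> space M | B. B \<in> sets (count_space UNIV)}"
    and A2: "\<forall>x \<in> space M. mono_on (Zsp L) (D x)"
    and A3: "\<forall>l<L. pZ M Z l > 0 \<and> piZ M D Z l > 0" "posdef L (SigmaZ M Z)"
    and A4: "A4 M Z L"
    and "wsimplex L w"
  shows "beta_star M Y0 Y1 D Z L w = (\<Sum>t \<in> Types L. psi M D Z L w t * LATE M Y0 Y1 D t)
         \<and> (\<forall>t \<in> Types L. psi M D Z L w t \<ge> 0)
         \<and> (\<Sum>t \<in> Types L. psi M D Z L w t) = 1"
proof -
  have "D x \<in> Types L" if "x \<in> space M" for x
    using assms(6) A2 that by (simp add: Types_def)
  then interpret iv_model M L Z Y0 Y1 D
    using assms(1,3-5,7,8) A1
    by (intro iv_model.intro instrument_model.intro instrument_model_axioms.intro iv_model_axioms.intro) simp_all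
  have evZ_pos: "prob (evZ M Z l b) \<noteq> 0" if "l < L" for l b
    using prob_evZ_False_pos[OF A3(2) that] A3(1) that by (cases b) (auto simp: pZ_def)
  have piZ_pos: "0 < piZ M D Z l" if "l < L" for l
    using A3(1) that by blast
  then have "(\<Sum>t\<in>Types L. psi M D Z L w t) = 1"
    by (intro sum_psi_eq_one[OF assms(14)]) (metis less_irrefl)
  then show ?thesis
    using beta_star_eq_sum_psi_LATE[OF evZ_pos] psi_nonneg[OF A4 assms(14) piZ_pos] by blast
qed

end
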